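(* Let $1<p<\infty$ and $W:\mathbb{M}^{3\times3}\to[0,+\infty]$ satisfy (H1)–(H5) below. Let $E\subset\mathbb{R}^2$ be open and bounded, $\eta>0$, and $G\in C(\overline E,\mathbb{M}^{3\times2})$ with $|G^1(x)\wedge G^2(x)|\geq\eta$ for every $x\in\overline E$. Let $\varepsilon\in(0,1/2)$, let $\mathcal{T}$ be a finite triangulation of $E$ and let $\Psi:E\to\mathbb{M}^{2\times2}$ be piecewise constant on the triangulation with $\|\det\Psi-1\|_{L^\infty}\leq\varepsilon$. Then there exist $\varphi\in C^\infty(\overline E,\mathbb{R}^3)$ and $\beta=\beta(\eta,\|G\|_{L^\infty},\|\Psi\|_{L^\infty})>0$ such that $\|\varphi\|_{L^\infty(E)}\leq\beta$, $$\det(G(x)\Psi(x)|\varphi(x))\geq\tfrac1\beta,$$ and $$\int_E W(G(x)\Psi(x)|\varphi(x))\,dx\leq\int_E W_0(G(x)\Psi(x))\,dx+\varepsilon.$$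
   Context: Hypotheses: (H1) $W$ continuous as a $[0,+\infty]$-valued function; (H2) $W(RF)=W(F)$ for $R\in SO(3)$; (H3) $W(F)<\infty$ if $\det F>0$ and $W(F)=+\infty$ if $\det F\leq0$; (H4) $W(F)\geq C_1|F|^p-1/C_1$; (H5) for each $\delta>0$, $W(F)\leq c_\delta(1+|F|^p)$ when $\det F\geq\delta$. $W_0(A):=\inf_{\xi\in\mathbb{R}^3}W(A|\xi)$, where $(A|\xi)$ is the $3\times3$ matrix with columns $A^1,A^2,\xi$; $\wedge$ is the vector product. *)

theory Defs
  imports "HOL-Analysis.Analysis"
begin

definition augm :: "real^2^3 \<Rightarrow> real^3 \<Rightarrow> real^3^3" where
  "augm A \<xi> = (\<chi> i j. if j = 1 then A $ i $ 1 else if j = 2 then A $ i $ 2 else \<xi> $ i)"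

definition W0 :: "(real^3^3 \<Rightarrow> ennreal) \<Rightarrow> real^2^3 \<Rightarrow> ennreal" where
  "W0 W A = (INF \<xi>. W (augm A \<xi>))"

text \<open>Hypotheses (H1)-(H5) on W (with exponent p).\<close>
definition hyps_W :: "real \<Rightarrow> (real^3^3 \<Rightarrow> ennreal) \<Rightarrow> bool" where
  "hyps_W p W \<longleftrightarrow>
     continuous_on UNIV W \<and>
     (\<forall>R F. orthogonal_matrix R \<and> det R = 1 \<longrightarrow> W (R ** F) = W F) \<and>
     (\<forall>F. det F > 0 \<longrightarrow> W F < \<infinity>) \<and>
     (\<forall>F. det F \<le> 0 \<longrightarrow> W F = \<infinity>) \<and>
     (\<exists>C1>0. \<forall>F. W F \<ge> ennreal (C1 * norm F powr p - 1 / C1)) \<and>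
     (\<forall>\<delta>>0. \<exists>c. \<forall>F. det F \<ge> \<delta> \<longrightarrow> W F \<le> ennreal (c * (1 + norm F powr p)))"

definition triangle :: "(real^2) set \<Rightarrow> bool" where
  "triangle K \<longleftrightarrow> (\<exists>a b c. \<not> collinear {a, b, c} \<and> K = convex hull {a, b, c})"

definition triangulation :: "(real^2) set set \<Rightarrow> (real^2) set \<Rightarrow> bool" where
  "triangulation T E \<longleftrightarrow> finite T \<and> (\<forall>K\<in>T. triangle K) \<and>
     (\<forall>K\<in>T. \<forall>K'\<in>T. K \<noteq> K' \<longrightarrow> interior K \<inter> interior K' = {}) \<and>
     \<Union>T = closure E"

text \<open>Psi is piecewise constant on T: there is a value per triangle, and at every point of E
  Psi takes the value of some triangle containing that point (on interiors it is forced).\<close>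
definition pw_const :: "(real^2) set set \<Rightarrow> (real^2) set \<Rightarrow> (real^2 \<Rightarrow> 'b) \<Rightarrow> bool" where
  "pw_const T E \<Psi> \<longleftrightarrow> (\<exists>c. \<forall>x\<in>E. \<exists>K\<in>T. x \<in> K \<and> \<Psi> x = c K)"

text \<open>C-infinity maps on the whole space (all iterated Frechet derivatives exist).\<close>
definition C_inf :: "('a::real_normed_vector \<Rightarrow> 'b::real_normed_vector) \<Rightarrow> bool" where
  "C_inf f \<longleftrightarrow> (\<exists>S. f \<in> S \<and> (\<forall>g\<in>S. \<exists>Dg. (\<forall>x. (g has_derivative Dg x) (at x)) \<and>
                                      (\<forall>v. (\<lambda>x. Dg x v) \<in> S)))"

end

theory Submission
  imports Defs
begin

text \<open>Write A = G \<Psi>. On a fine grid, choose in every cell a point y and a near-minimiser \<xi> of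
  W(A(y)|-). By coercivity and continuity of W all these near-minimisers lie in one compact sublevel
  set of W, on which det \<ge> \<delta> > 0. Blend the cellwise constant \<xi> with the unit normal
  \<nu> = G^1 \<times> G^2 / |G^1 \<times> G^2| through a continuous weight vanishing on the grid lines.
  Since det(G|-) is linear in the last column, det(G|\<nu>) \<ge> \<eta> and det(G|\<xi>) \<ge> \<delta>/3, the blend has
  determinant bounded below, and so has a close polynomial (Stone-Weierstrass) approximation \<phi>.
  By uniform continuity of W on compact subsets of {det > 0}, W(A|\<phi>) \<le> W0(A) + O(\<epsilon>) off a
  neighbourhood of the triangle edges and the grid lines; both sets are negligible, so this
  neighbourhood has small measure, and on it W(A|\<phi>) is merely bounded.\<close>

section \<open>Real arithmetic and matrices\<close>

lemma divide_le_of_le_mult: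
  fixes a c d t :: real
  assumes "a \<le> d * t" "0 < d" "d \<le> c" "0 \<le> a"
  shows "a / c \<le> t"
proof -
  have "a / c \<le> a / d"
    using assms(2-4) by (intro divide_left_mono) auto
  also have "\<dots> \<le> t"
    using assms(1,2) by (simp add: pos_divide_le_eq mult.commute)
  finally show ?thesis .
qed

lemma matrix_diff_rdistrib:
  fixes A B :: "'a::ring_1^'n^'m"
  shows "(A - B) ** C = A ** C - B ** C"
  by (simp add: matrix_matrix_mult_def vec_eq_iff left_diff_distrib flip: sum_subtractf)

lemma power2_norm_vec: "(norm x)\<^sup>2 = (\<Sum>i\<in>UNIV. (norm (x $ i))\<^sup>2)"
  by (simp add: norm_vec_def L2_set_def sum_nonneg)

lemma norm_matrix_mult_le:
  fixes A :: "real^'n^'m" and B :: "real^'p^'n"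
  shows "norm (A ** B) \<le> norm A * norm B"
proof -
  have column_sum: "(\<Sum>j\<in>UNIV. (norm (column j B))\<^sup>2) = (norm B)\<^sup>2"
  proof -
    have "(\<Sum>j\<in>UNIV. (norm (column j B))\<^sup>2) = (\<Sum>j\<in>UNIV. \<Sum>k\<in>UNIV. (B $ k $ j)\<^sup>2)"
      by (simp add: power2_norm_vec column_def)
    also have "\<dots> = (\<Sum>k\<in>UNIV. (norm (B $ k))\<^sup>2)"
      by (subst sum.swap) (simp add: power2_norm_vec[of "B $ _"])
    finally show ?thesis by (simp add: power2_norm_vec[of B])
  qed
  have row: "(norm ((A ** B) $ i))\<^sup>2 \<le> (norm (A $ i))\<^sup>2 * (norm B)\<^sup>2" for i
  proof -
    have "(norm ((A ** B) $ i))\<^sup>2 = (\<Sum>j\<in>UNIV. (A $ i \<bullet> column j B)\<^sup>2)"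
      unfolding power2_norm_vec[of "(A ** B) $ i"]
      by (simp add: inner_vec_def matrix_matrix_mult_def column_def)
    also have "\<dots> \<le> (\<Sum>j\<in>UNIV. (norm (A $ i))\<^sup>2 * (norm (column j B))\<^sup>2)"
    proof (intro sum_mono)
      fix j
      have "\<bar>A $ i \<bullet> column j B\<bar> \<le> \<bar>norm (A $ i) * norm (column j B)\<bar>"
        using Cauchy_Schwarz_ineq2 by simp
      then show "(A $ i \<bullet> column j B)\<^sup>2 \<le> (norm (A $ i))\<^sup>2 * (norm (column j B))\<^sup>2"
        by (simp only: abs_le_square_iff power_mult_distrib)
    qed
    also have "\<dots> = (norm (A $ i))\<^sup>2 * (norm B)\<^sup>2"
      by (simp add: sum_distrib_left[symmetric] column_sum)
    finally show ?thesis .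
  qed
  have "(norm (A ** B))\<^sup>2 \<le> (norm A * norm B)\<^sup>2"
    using sum_mono[OF row] by (simp add: power2_norm_vec[of "A ** B"] power2_norm_vec[of A]
        power_mult_distrib sum_distrib_right[symmetric])
  then show ?thesis by (rule power2_le_imp_le) simp
qed

lemma uniformly_continuous_on_matrix_mult_right:
  fixes G :: "'a::metric_space \<Rightarrow> real^'n^'m"
  assumes "uniformly_continuous_on S G" "0 < e"
  obtains h where "0 < h" "\<And>x y (M::real^'p^'n). x \<in> S \<Longrightarrow> y \<in> S \<Longrightarrow> dist x y < h \<Longrightarrow>
    norm M \<le> b \<Longrightarrow> norm (G x ** M - G y ** M) < e"
proof -
  obtain h where h: "0 < h" "\<forall>x\<in>S. \<forall>y\<in>S. dist y x < h \<longrightarrow> dist (G y) (G x) < e / (\<bar>b\<bar> + 1)"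
    using assms unfolding uniformly_continuous_on_def by (metis divide_pos_pos abs_ge_zero add_nonneg_pos zero_less_one)
  show ?thesis
  proof (rule that[OF h(1)])
    fix x y and M :: "real^'p^'n"
    assume "x \<in> S" "y \<in> S" "dist x y < h" "norm M \<le> b"
    then have "norm (G x - G y) < e / (\<bar>b\<bar> + 1)"
      using h(2) by (metis dist_commute dist_norm)
    have "norm (G x ** M - G y ** M) \<le> norm (G x - G y) * norm M"
      unfolding matrix_diff_rdistrib[symmetric] by (rule norm_matrix_mult_le)
    also have "\<dots> \<le> e / (\<bar>b\<bar> + 1) * \<bar>b\<bar>"
      using \<open>norm (G x - G y) < _\<close> \<open>norm M \<le> b\<close> \<open>0 < e\<close> by (intro mult_mono) auto
    also have "\<dots> < e"
      using \<open>0 < e\<close> by (simp add: field_simps)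
    finally show "norm (G x ** M - G y ** M) < e" .
  qed
qed

lemma continuous_on_det_3: "continuous_on S (det :: real^3^3 \<Rightarrow> real)"
proof -
  have det_eq: "det = (\<lambda>F::real^3^3. F$1$1 * F$2$2 * F$3$3 + F$1$2 * F$2$3 * F$3$1 + F$1$3 * F$2$1 * F$3$2 -
      F$1$1 * F$2$3 * F$3$2 - F$1$2 * F$2$1 * F$3$3 - F$1$3 * F$2$2 * F$3$1)"
    by (rule ext) (simp add: det_3)
  show ?thesis
    unfolding det_eq by (intro continuous_intros)
qed

section \<open>The matrix (A|\<xi>)\<close>

abbreviation wedge :: "real^2^3 \<Rightarrow> real^3" where
  "wedge A \<equiv> cross3 (column 1 A) (column 2 A)"

lemma augm_nth [simp]:
  "augm A \<xi> $ i $ 1 = A $ i $ 1" "augm A \<xi> $ i $ 2 = A $ i $ 2" "augm A \<xi> $ i $ 3 = \<xi> $ i"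
  by (simp_all add: augm_def)

lemma det_augm: "det (augm A \<xi>) = wedge A \<bullet> \<xi>"
  by (simp add: augm_def det_3 cross3_def column_def inner_vec_def sum_3 algebra_simps)

lemma wedge_matrix_mult: "wedge (G ** M) = det (M::real^2^2) *\<^sub>R wedge G"
  by (simp add: cross3_def column_def matrix_matrix_mult_def sum_2 det_2 vec_eq_iff forall_3 vector_3
      algebra_simps)

lemma det_augm_matrix_mult: "det (augm (G ** M) \<xi>) = det (M::real^2^2) * det (augm G \<xi>)"
  by (simp add: det_augm wedge_matrix_mult)

lemma det_augm_sgn_wedge: "det (augm A (sgn (wedge A))) = norm (wedge A)"
  by (cases "wedge A = 0")
    (simp_all add: det_augm sgn_div_norm inner_commute power2_norm_eq_inner[symmetric] power2_eq_square)

lemma det_augm_blend: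
  "det (augm A ((1 - w) *\<^sub>R \<nu> + w *\<^sub>R \<xi>)) = (1 - w) * det (augm A \<nu>) + w * det (augm A \<xi>)"
  by (simp add: det_augm inner_add_right)

lemma augm_diff: "augm A \<xi> - augm B \<zeta> = augm (A - B) (\<xi> - \<zeta>)"
  by (simp add: augm_def vec_eq_iff)

lemma norm_augm_squared: "(norm (augm A \<xi>))\<^sup>2 = (norm A)\<^sup>2 + (norm \<xi>)\<^sup>2"
  by (simp only: power2_norm_eq_inner) (simp add: inner_vec_def sum_3 sum_2)

lemma norm_le_norm_augm: "norm \<xi> \<le> norm (augm A \<xi>)"
  by (rule power2_le_imp_le) (simp_all add: norm_augm_squared)

lemma norm_augm_le: "norm (augm A \<xi>) \<le> norm A + norm \<xi>"
  by (rule power2_le_imp_le) (simp_all add: norm_augm_squared power2_sum)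

lemma norm_augm_diff_le: "norm (augm A \<xi> - augm B \<zeta>) \<le> norm (A - B) + norm (\<xi> - \<zeta>)"
  by (simp add: augm_diff norm_augm_le)

section \<open>Smooth maps\<close>

lemma real_polynomial_function_has_derivative:
  assumes "real_polynomial_function p"
  shows "\<exists>D. (\<forall>x. (p has_derivative D x) (at x)) \<and> (\<forall>v. real_polynomial_function (\<lambda>x. D x v))"
  using assms
proof (induction p)
  case (linear f)
  then show ?case
    by (intro exI[of _ "\<lambda>x. f"]) (auto intro: bounded_linear_imp_has_derivative)
next
  case (const c)
  show ?case by (intro exI[of _ "\<lambda>x v. 0"]) auto
next
  case (add f g)
  then obtain Df Dg where "\<And>x. (f has_derivative Df x) (at x)" "\<And>v. real_polynomial_function (\<lambda>x. Df x v)"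
    "\<And>x. (g has_derivative Dg x) (at x)" "\<And>v. real_polynomial_function (\<lambda>x. Dg x v)"
    by metis
  then show ?case
    by (intro exI[of _ "\<lambda>x v. Df x v + Dg x v"]) (auto intro!: has_derivative_add)
next
  case (mult f g)
  then obtain Df Dg where "\<And>x. (f has_derivative Df x) (at x)" "\<And>v. real_polynomial_function (\<lambda>x. Df x v)"
    "\<And>x. (g has_derivative Dg x) (at x)" "\<And>v. real_polynomial_function (\<lambda>x. Dg x v)"
    by metis
  note D = this
  have "((\<lambda>x. f x * g x) has_derivative (\<lambda>v. f x * Dg x v + Df x v * g x)) (at x)" for x
    using D by (intro has_derivative_mult) auto
  moreover have "real_polynomial_function (\<lambda>x. f x * Dg x v + Df x v * g x)" for v
    using D mult.hyps by (intro real_polynomial_function.intros(3,4)) auto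
  ultimately show ?case
    by (intro exI[of _ "\<lambda>x v. f x * Dg x v + Df x v * g x"]) blast
qed

lemma polynomial_function_has_derivative:
  fixes p :: "'a::real_normed_vector \<Rightarrow> 'b::euclidean_space"
  assumes "polynomial_function p"
  shows "\<exists>D. (\<forall>x. (p has_derivative D x) (at x)) \<and> (\<forall>v. polynomial_function (\<lambda>x. D x v))"
proof -
  have "\<forall>b\<in>Basis. \<exists>D. (\<forall>x. ((\<lambda>x. p x \<bullet> b) has_derivative D x) (at x)) \<and>
      (\<forall>v. real_polynomial_function (\<lambda>x. D x v))"
    using assms real_polynomial_function_has_derivative
    unfolding polynomial_function_iff_Basis_inner by blast
  then obtain D where D: "\<And>b x. b \<in> Basis \<Longrightarrow> ((\<lambda>x. p x \<bullet> b) has_derivative D b x) (at x)"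
    "\<And>b v. b \<in> Basis \<Longrightarrow> real_polynomial_function (\<lambda>x. D b x v)"
    by metis
  have "(p has_derivative (\<lambda>v. \<Sum>b\<in>Basis. D b x v *\<^sub>R b)) (at x)" for x
  proof -
    have "((\<lambda>x. \<Sum>b\<in>Basis. (p x \<bullet> b) *\<^sub>R b) has_derivative (\<lambda>v. \<Sum>b\<in>Basis. D b x v *\<^sub>R b)) (at x)"
      by (intro has_derivative_sum has_derivative_scaleR_left D)
    then show ?thesis by (simp add: euclidean_representation)
  qed
  moreover have "polynomial_function (\<lambda>x. \<Sum>b\<in>Basis. D b x v *\<^sub>R b)" for v
    using D(2) by (intro polynomial_function_sum polynomial_function_mult)
      (auto simp: real_polynomial_function_eq)
  ultimately show ?thesis
    by (intro exI[of _ "\<lambda>x v. \<Sum>b\<in>Basis. D b x v *\<^sub>R b"]) blast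
qed

lemma polynomial_function_C_inf:
  fixes p :: "'a::real_normed_vector \<Rightarrow> 'b::euclidean_space"
  shows "polynomial_function p \<Longrightarrow> C_inf p"
  unfolding C_inf_def using polynomial_function_has_derivative
  by (intro exI[of _ "Collect polynomial_function"]) auto

section \<open>Triangulations\<close>

lemma
  assumes "triangle K"
  shows compact_triangle: "compact K" and convex_triangle: "convex K"
    and interior_triangle_nonempty: "interior K \<noteq> {}"
proof -
  obtain a b c where nc: "\<not> collinear {a, b, c}" and K: "K = convex hull {a, b, c}"
    using assms unfolding triangle_def by blast
  show "compact K" "convex K"
    unfolding K by (simp_all add: finite_imp_compact_convex_hull)
  have "aff_dim K = aff_dim {a, b, c}"
    unfolding K by (rule aff_dim_convex_hull)
  moreover have "aff_dim {a, b, c} > 1"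
    using nc collinear_aff_dim by force
  moreover have "aff_dim K \<le> int DIM(real^2)"
    by (rule aff_dim_le_DIM)
  ultimately have "rel_interior K = interior K"
    by (intro interior_rel_interior) simp
  then show "interior K \<noteq> {}"
    using rel_interior_eq_empty[of K] K by auto
qed

lemma frontier_triangle_nonempty: "triangle K \<Longrightarrow> frontier K \<noteq> {}"
  by (metis compact_triangle compact_imp_bounded frontier_eq_empty interior_empty
      interior_triangle_nonempty not_bounded_UNIV)

lemma closure_interior_triangle: "triangle K \<Longrightarrow> closure (interior K) = K"
  by (simp add: convex_closure_interior convex_triangle interior_triangle_nonempty
      compact_triangle compact_imp_closed)

lemma pw_const_eq_on_ball:
  assumes T: "triangulation T E" and \<Psi>: "pw_const T E \<Psi>" and "K \<in> T" "ball x r \<subseteq> K"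
    and "x \<in> E" "y \<in> E" "dist x y < r"
  shows "\<Psi> x = \<Psi> y"
proof -
  obtain c where c: "\<forall>x\<in>E. \<exists>K\<in>T. x \<in> K \<and> \<Psi> x = c K"
    using \<Psi> unfolding pw_const_def by blast
  have on_interior: "\<Psi> z = c K" if "z \<in> E" "z \<in> interior K" for z
  proof -
    obtain K' where K': "K' \<in> T" "z \<in> K'" "\<Psi> z = c K'"
      using c \<open>z \<in> E\<close> by blast
    have "triangle K'"
      using T K'(1) unfolding triangulation_def by blast
    then have "z \<in> closure (interior K')"
      using closure_interior_triangle K'(2) by simp
    then have "interior K \<inter> interior K' \<noteq> {}"
      using that(2) open_Int_closure_eq_empty[of "interior K" "interior K'"] by auto
    then show ?thesis
      using T \<open>K \<in> T\<close> K' unfolding triangulation_def by metis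
  qed
  have "ball x r \<subseteq> interior K"
    using \<open>ball x r \<subseteq> K\<close> by (simp add: interior_maximal)
  moreover have "0 < r"
    using \<open>dist x y < r\<close> zero_le_dist[of x y] by linarith
  then have "x \<in> ball x r" "y \<in> ball x r"
    using \<open>dist x y < r\<close> by simp_all
  ultimately have "x \<in> interior K" "y \<in> interior K"
    by blast+
  then show ?thesis
    using on_interior \<open>x \<in> E\<close> \<open>y \<in> E\<close> by simp
qed

lemma pw_const_finite_image:
  assumes "finite T" "pw_const T E \<Psi>"
  shows "finite (\<Psi> ` E)"
proof -
  obtain c where "\<forall>x\<in>E. \<exists>K\<in>T. x \<in> K \<and> \<Psi> x = c K"
    using assms(2) unfolding pw_const_def by blast
  then have "\<Psi> ` E \<subseteq> c ` T" by blast
  then show ?thesis using assms(1) finite_subset by blast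
qed

lemma triangulation_ball_subset:
  assumes T: "triangulation T E" and "x \<in> closure E" and far: "r < infdist x (\<Union>K\<in>T. frontier K)"
  shows "\<exists>K\<in>T. ball x r \<subseteq> K"
proof -
  obtain K where K: "K \<in> T" "x \<in> K"
    using T \<open>x \<in> closure E\<close> unfolding triangulation_def by blast
  have "ball x r \<inter> frontier K = {}"
  proof (rule ccontr)
    assume "ball x r \<inter> frontier K \<noteq> {}"
    then obtain y where "y \<in> ball x r" "y \<in> frontier K" by blast
    moreover from this have "infdist x (\<Union>K\<in>T. frontier K) \<le> dist x y"
      using K(1) by (intro infdist_le) blast
    ultimately show False using far by simp
  qed
  then have "ball x r \<subseteq> K"
  proof (cases "r > 0")
    case True
    then have "ball x r \<inter> K \<noteq> {}"
      using K(2) centre_in_ball by blast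
    with \<open>ball x r \<inter> frontier K = {}\<close> show ?thesis
      using connected_Int_frontier[of "ball x r" K] by blast
  qed (simp add: ball_empty)
  with K show ?thesis by blast
qed

lemma
  assumes "triangulation T E"
  shows closed_triangulation_edges: "closed (\<Union>K\<in>T. frontier K)"
    and negligible_triangulation_edges: "negligible (\<Union>K\<in>T. frontier K)"
  using assms convex_triangle unfolding triangulation_def
  by (auto intro!: negligible_convex_frontier)

lemma triangulation_edges_nonempty:
  assumes "triangulation T E" "E \<noteq> {}"
  shows "(\<Union>K\<in>T. frontier K) \<noteq> {}"
proof -
  obtain x where "x \<in> E"
    using assms(2) by blast
  then have "x \<in> \<Union>T"
    using assms(1) closure_subset unfolding triangulation_def by auto
  then obtain K where "K \<in> T"
    by blast
  moreover from this have "triangle K"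
    using assms(1) unfolding triangulation_def by blast
  ultimately show ?thesis
    using frontier_triangle_nonempty by blast
qed

section \<open>Lebesgue measure\<close>

lemma closed_imp_sets_lebesgue: "closed S \<Longrightarrow> S \<in> sets lebesgue"
  by (metis borel_closed sets_completionI_sets sets_lborel)

lemma open_imp_sets_lebesgue: "open S \<Longrightarrow> S \<in> sets lebesgue"
  by (metis borel_open sets_completionI_sets sets_lborel)

lemma measure_infdist_neighbourhood_small:
  fixes E N :: "'a::euclidean_space set"
  assumes E: "E \<in> sets lebesgue" "bounded E" and N: "closed N" "N \<noteq> {}" "negligible N"
    and "0 < e"
  obtains r where "0 < r" "measure lebesgue (E \<inter> {x. infdist x N \<le> r}) < e"
proof -
  define A where "A n = E \<inter> {x. infdist x N \<le> 1 / Suc n}" for n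
  have "closed {x. infdist x N \<le> 1 / Suc n}" for n
    by (intro closed_Collect_le continuous_intros)
  then have A_sets: "A n \<in> sets lebesgue" for n
    unfolding A_def using E(1) closed_imp_sets_lebesgue by blast
  have "decseq A"
    unfolding A_def decseq_def
    by (auto elim!: order_trans intro!: divide_left_mono simp del: of_nat_Suc)
  moreover have "A n \<in> lmeasurable" for n
    using A_sets E(2) unfolding A_def by (intro bounded_set_imp_lmeasurable bounded_Int) auto
  then have "emeasure lebesgue (A n) \<noteq> \<infinity>" for n
    using fmeasurableD2 by (metis infinity_ennreal_def)
  ultimately have "(\<lambda>n. measure lebesgue (A n)) \<longlonglongrightarrow> measure lebesgue (\<Inter>n. A n)"
    using A_sets by (intro Lim_measure_decseq) auto
  moreover have "(\<Inter>n. A n) \<subseteq> N"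
  proof
    fix x assume "x \<in> (\<Inter>n. A n)"
    then have "infdist x N \<le> 1 / Suc n" for n
      unfolding A_def by blast
    moreover have "(\<lambda>n. 1 / real (Suc n)) \<longlonglongrightarrow> 0"
      using LIMSEQ_inverse_real_of_nat by (simp add: inverse_eq_divide)
    ultimately have "infdist x N = 0"
      by (intro antisym infdist_nonneg) (metis LIMSEQ_le_const)
    then show "x \<in> N"
      using in_closure_iff_infdist_zero[OF N(2)] N(1) by (simp add: closure_closed)
  qed
  then have "measure lebesgue (\<Inter>n. A n) = 0"
    using N(3) A_sets by (metis negligible_imp_measure0 negligible_subset)
  ultimately have "\<forall>\<^sub>F n in sequentially. measure lebesgue (A n) < e"
    using \<open>0 < e\<close> by (intro order_tendstoD(2)) simp_all
  then obtain n where "measure lebesgue (A n) < e"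
    by (auto simp: eventually_sequentially)
  then show ?thesis
    using that[of "1 / Suc n"] unfolding A_def by simp
qed

(* Only g has to be measurable, so this applies to integrands such as W(A|\<phi>) whose
  measurability is never established. *)
lemma nn_integral_add_le:
  assumes "g \<in> borel_measurable M"
  shows "(\<integral>\<^sup>+ x. f x + g x \<partial>M) \<le> (\<integral>\<^sup>+ x. f x \<partial>M) + (\<integral>\<^sup>+ x. g x \<partial>M)"
  unfolding nn_integral_def_finite[of M "\<lambda>x. f x + g x"]
proof (rule SUP_least)
  fix s assume "s \<in> {s. simple_function M s \<and> s \<le> (\<lambda>x. f x + g x) \<and> (\<forall>x. s x < top)}"
  then have s: "simple_function M s" "\<And>x. s x \<le> f x + g x" "\<And>x. s x < top"
    by (auto simp: le_fun_def)
  have split: "s x = (s x - g x) + min (s x) (g x)" for x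
    using s(3)[of x] by (metis diff_add_self_ennreal diff_eq_0_ennreal min.cobounded1 min_def)
  have "integral\<^sup>S M s = (\<integral>\<^sup>+ x. (s x - g x) + min (s x) (g x) \<partial>M)"
    using nn_integral_eq_simple_integral[OF s(1)] split by simp
  also have "\<dots> = (\<integral>\<^sup>+ x. s x - g x \<partial>M) + (\<integral>\<^sup>+ x. min (s x) (g x) \<partial>M)"
    using borel_measurable_simple_function[OF s(1)] assms by (intro nn_integral_add) auto
  also have "\<dots> \<le> (\<integral>\<^sup>+ x. f x \<partial>M) + (\<integral>\<^sup>+ x. g x \<partial>M)"
    using s(2,3) by (intro add_mono nn_integral_mono)
      (metis add.commute ennreal_minus_le_iff top.not_eq_extremum, simp)
  finally show "integral\<^sup>S M s \<le> (\<integral>\<^sup>+ x. f x \<partial>M) + (\<integral>\<^sup>+ x. g x \<partial>M)" .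
qed

lemma nn_set_integral_le_exceptional_set:
  assumes "E \<in> fmeasurable M" "B \<in> sets M" "B \<subseteq> E" "0 \<le> c" "0 \<le> e"
    and bound: "\<And>x. x \<in> E \<Longrightarrow> f x \<le> ennreal c"
    and approx: "\<And>x. x \<in> E - B \<Longrightarrow> f x \<le> g x + ennreal e"
  shows "(\<integral>\<^sup>+ x\<in>E. f x \<partial>M) \<le> (\<integral>\<^sup>+ x\<in>E. g x \<partial>M) + ennreal (e * measure M E + c * measure M B)"
proof -
  have "B \<in> fmeasurable M"
    using fmeasurableI2[OF assms(1,3,2)] .
  define r where "r x = ennreal e * indicator E x + ennreal c * indicator B x" for x
  have r_measurable: "r \<in> borel_measurable M"
    unfolding r_def using assms(1,2) by auto
  have "f x * indicator E x \<le> g x * indicator E x + r x" for x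
    using bound[of x] approx[of x] \<open>B \<subseteq> E\<close>
    by (cases "x \<in> E"; cases "x \<in> B") (auto simp: r_def intro: add_increasing order_trans)
  then have "(\<integral>\<^sup>+ x\<in>E. f x \<partial>M) \<le> (\<integral>\<^sup>+ x. g x * indicator E x + r x \<partial>M)"
    by (intro nn_integral_mono)
  also have "\<dots> \<le> (\<integral>\<^sup>+ x\<in>E. g x \<partial>M) + (\<integral>\<^sup>+ x. r x \<partial>M)"
    using r_measurable by (rule nn_integral_add_le)
  also have "(\<integral>\<^sup>+ x. r x \<partial>M) = ennreal (e * measure M E + c * measure M B)"
    unfolding r_def using assms(1,4,5) \<open>B \<in> fmeasurable M\<close>
    by (simp add: nn_integral_add nn_integral_cmult_indicator emeasure_eq_measure2 ennreal_mult)
  finally show ?thesis .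
qed

section \<open>Grids\<close>

definition grid_cell :: "real \<Rightarrow> real^'n \<Rightarrow> int^'n" where
  "grid_cell h x = (\<chi> k. \<lfloor>x $ k / h\<rfloor>)"

definition grid_lines :: "real \<Rightarrow> (real^'n) set" where
  "grid_lines h = {x. \<exists>k. x $ k / h \<in> \<int>}"

lemma dist_lt_if_same_grid_cell:
  fixes x y :: "real^'n" and h :: real
  assumes "0 < h" "grid_cell h x = grid_cell h y"
  shows "dist x y < real CARD('n) * h"
proof -
  have "\<bar>(x - y) $ k\<bar> < h" for k
  proof -
    have "\<lfloor>x $ k / h\<rfloor> = \<lfloor>y $ k / h\<rfloor>"
      using assms(2) unfolding grid_cell_def by (metis vec_lambda_beta)
    then have "\<bar>x $ k / h - y $ k / h\<bar> < 1"
      using floor_correct[of "x $ k / h"] floor_correct[of "y $ k / h"] by linarith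
    then show ?thesis
      using assms(1) by (simp add: abs_less_iff field_simps)
  qed
  then have "(\<Sum>k\<in>UNIV. \<bar>(x - y) $ k\<bar>) < (\<Sum>k\<in>(UNIV::'n set). h)"
    by (intro sum_strict_mono) auto
  moreover have "dist x y \<le> (\<Sum>k\<in>UNIV. \<bar>(x - y) $ k\<bar>)"
    unfolding dist_norm by (rule norm_le_l1_cart)
  ultimately show ?thesis by simp
qed

lemma zero_in_grid_lines: "0 \<in> grid_lines h"
  by (simp add: grid_lines_def)

lemma closed_grid_lines: "closed (grid_lines h :: (real^'n) set)"
proof -
  have "grid_lines h = (\<Union>k. (\<lambda>x::real^'n. x $ k / h) -` \<int>)"
    by (auto simp: grid_lines_def)
  moreover have "closed ((\<lambda>x::real^'n. x $ k / h) -` \<int>)" for k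
    by (intro continuous_closed_vimage) (auto simp: divide_inverse intro!: continuous_intros isCont_vec_nth)
  ultimately show ?thesis
    by (simp add: closed_UN)
qed

lemma negligible_grid_lines:
  assumes "h \<noteq> 0"
  shows "negligible (grid_lines h :: (real^'n) set)"
proof -
  define H where "H = (\<lambda>(k, i). {x::real^'n. axis k 1 \<bullet> x = real_of_int i * h}) ` UNIV"
  have "grid_lines h \<subseteq> \<Union>H"
  proof
    fix x :: "real^'n" assume "x \<in> grid_lines h"
    then obtain k i where "x $ k / h = real_of_int i"
      unfolding grid_lines_def by (auto elim: Ints_cases)
    then have "x \<in> {x. axis k 1 \<bullet> x = real_of_int i * h}"
      using assms by (simp add: inner_axis' field_simps)
    then show "x \<in> \<Union>H"
      unfolding H_def by blast
  qed
  moreover have "negligible (\<Union>H)"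
    unfolding H_def
    by (intro negligible_countable_Union countable_image)
      (auto intro!: negligible_hyperplane simp: axis_eq_0_iff)
  ultimately show ?thesis
    using negligible_subset by blast
qed

lemma eventually_grid_cell_eq:
  assumes "x \<notin> grid_lines h"
  shows "\<forall>\<^sub>F z in at x within S. grid_cell h z = grid_cell h x"
proof -
  have "\<forall>\<^sub>F z in at x within S. \<lfloor>z $ k / h\<rfloor> = \<lfloor>x $ k / h\<rfloor>" for k
    using assms unfolding grid_lines_def
    by (intro eventually_floor_eq tendsto_intros) auto
  then have "\<forall>\<^sub>F z in at x within S. \<forall>k. \<lfloor>z $ k / h\<rfloor> = \<lfloor>x $ k / h\<rfloor>"
    by (simp add: eventually_all_finite)
  then show ?thesis
    by eventually_elim (simp add: grid_cell_def vec_eq_iff)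
qed

lemma cellwise_choice:
  assumes "\<And>y. y \<in> E \<Longrightarrow> \<exists>\<zeta>. P y \<zeta>"
  obtains \<xi> where "\<And>x. x \<in> E \<Longrightarrow> \<exists>y\<in>E. c y = c x \<and> P y (\<xi> (c x))"
    and "\<And>k. k \<notin> c ` E \<Longrightarrow> \<xi> k = z"
proof
  show "\<exists>y\<in>E. c y = c x \<and> P y (if c x \<in> c ` E then SOME \<zeta>. \<exists>y\<in>E. c y = c x \<and> P y \<zeta> else z)"
    if "x \<in> E" for x
  proof -
    have "\<exists>\<zeta>. \<exists>y\<in>E. c y = c x \<and> P y \<zeta>"
      using assms[OF that] that by blast
    from someI_ex[OF this] that show ?thesis
      by simp
  qed
qed auto

lemma continuous_on_blend:
  fixes w :: "'a::topological_space \<Rightarrow> real" and \<nu> :: "'a \<Rightarrow> 'b::real_normed_vector"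
  assumes w: "continuous_on S w" and \<nu>: "continuous_on S \<nu>"
    and bounded: "\<And>x. x \<in> S \<Longrightarrow> norm (\<xi> (c x)) \<le> B"
    and locally_const: "\<And>x. x \<in> S \<Longrightarrow> w x \<noteq> 0 \<Longrightarrow> \<forall>\<^sub>F z in at x within S. c z = c x"
  shows "continuous_on S (\<lambda>x. (1 - w x) *\<^sub>R \<nu> x + w x *\<^sub>R \<xi> (c x))"
  unfolding continuous_on_def
proof
  fix x assume "x \<in> S"
  have w_lim: "(w \<longlongrightarrow> w x) (at x within S)" and \<nu>_lim: "(\<nu> \<longlongrightarrow> \<nu> x) (at x within S)"
    using w \<nu> \<open>x \<in> S\<close> by (auto simp: continuous_on_def)
  show "((\<lambda>x. (1 - w x) *\<^sub>R \<nu> x + w x *\<^sub>R \<xi> (c x)) \<longlongrightarrow> (1 - w x) *\<^sub>R \<nu> x + w x *\<^sub>R \<xi> (c x))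
      (at x within S)"
  proof (cases "w x = 0")
    case True
    have "((\<lambda>z. w z *\<^sub>R \<xi> (c z)) \<longlongrightarrow> 0) (at x within S)"
    proof (rule Lim_null_comparison)
      show "\<forall>\<^sub>F z in at x within S. norm (w z *\<^sub>R \<xi> (c z)) \<le> \<bar>w z\<bar> * B"
        unfolding eventually_at_filter
        by (rule always_eventually) (auto intro: mult_left_mono bounded)
      show "((\<lambda>z. \<bar>w z\<bar> * B) \<longlongrightarrow> 0) (at x within S)"
        using tendsto_mult_right[OF tendsto_rabs[OF w_lim], of B] True by simp
    qed
    moreover have "((\<lambda>z. (1 - w z) *\<^sub>R \<nu> z) \<longlongrightarrow> (1 - w x) *\<^sub>R \<nu> x) (at x within S)"
      by (intro tendsto_intros w_lim \<nu>_lim)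
    ultimately show ?thesis
      using tendsto_add True by fastforce
  next
    case False
    have "((\<lambda>z. (1 - w z) *\<^sub>R \<nu> z + w z *\<^sub>R \<xi> (c x)) \<longlongrightarrow> (1 - w x) *\<^sub>R \<nu> x + w x *\<^sub>R \<xi> (c x))
        (at x within S)"
      by (intro tendsto_intros w_lim \<nu>_lim)
    then show ?thesis
      by (rule Lim_transform_eventually)
        (use locally_const[OF \<open>x \<in> S\<close> False] in \<open>auto elim: eventually_mono\<close>)
  qed
qed

definition grid_weight :: "real \<Rightarrow> real \<Rightarrow> real^'n \<Rightarrow> real" where
  "grid_weight h \<theta> x = min 1 (infdist x (grid_lines h) / \<theta>)"

lemma grid_weight_bounds: "0 < \<theta> \<Longrightarrow> 0 \<le> grid_weight h \<theta> x \<and> grid_weight h \<theta> x \<le> 1"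
  by (simp add: grid_weight_def infdist_nonneg)

lemma grid_weight_eq_1: "0 < \<theta> \<Longrightarrow> \<theta> \<le> infdist x (grid_lines h) \<Longrightarrow> grid_weight h \<theta> x = 1"
  by (simp add: grid_weight_def)

(* Continuous although \<xi> is composed with the piecewise constant grid_cell: the weight vanishes
  on the grid lines, where grid_cell jumps. *)
definition grid_blend ::
    "real \<Rightarrow> real \<Rightarrow> (real^'n \<Rightarrow> 'b::real_normed_vector) \<Rightarrow> (int^'n \<Rightarrow> 'b) \<Rightarrow> real^'n \<Rightarrow> 'b" where
  "grid_blend h \<theta> \<nu> \<xi> x = (1 - grid_weight h \<theta> x) *\<^sub>R \<nu> x + grid_weight h \<theta> x *\<^sub>R \<xi> (grid_cell h x)"

lemma continuous_on_grid_blend: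
  fixes \<nu> :: "real^'n \<Rightarrow> 'b::real_normed_vector"
  assumes "continuous_on S \<nu>" "\<And>k. norm (\<xi> k) \<le> B"
  shows "continuous_on S (grid_blend h \<theta> \<nu> \<xi>)"
proof -
  have "continuous_on S (grid_weight h \<theta>)"
    unfolding grid_weight_def divide_inverse by (intro continuous_intros)
  moreover have "\<forall>\<^sub>F z in at x within S. grid_cell h z = grid_cell h x"
    if "grid_weight h \<theta> x \<noteq> 0" for x :: "real^'n"
  proof (rule eventually_grid_cell_eq)
    show "x \<notin> grid_lines h"
      using that by (auto simp: grid_weight_def)
  qed
  ultimately show ?thesis
    unfolding grid_blend_def using assms by (intro continuous_on_blend) auto
qed

lemma smooth_approximation_grid_blend:
  fixes \<nu> :: "real^'n \<Rightarrow> 'b::euclidean_space"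
  assumes "compact S" "continuous_on S \<nu>" "\<And>k. norm (\<xi> k) \<le> B" "0 < e"
  obtains \<phi> where "C_inf \<phi>" "\<And>x. x \<in> S \<Longrightarrow> norm (\<phi> x - grid_blend h \<theta> \<nu> \<xi> x) < e"
proof -
  have "continuous_on S (grid_blend h \<theta> \<nu> \<xi>)"
    using assms(2,3) by (rule continuous_on_grid_blend)
  then obtain \<phi> where "polynomial_function \<phi>" "\<forall>x\<in>S. norm (grid_blend h \<theta> \<nu> \<xi> x - \<phi> x) < e"
    using Stone_Weierstrass_polynomial_function[OF assms(1) _ assms(4)] by blast
  then show ?thesis
    using that polynomial_function_C_inf by (auto simp: norm_minus_commute)
qed

lemma triangulation_grid_exceptional_set:
  assumes T: "triangulation T E" and E: "open E" "bounded E" and "0 < h0" "0 < e"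
  obtains h \<theta> B where "0 < h" "h \<le> h0" "0 < \<theta>" "B \<in> sets lebesgue" "B \<subseteq> E"
    "measure lebesgue B < e"
    "\<And>x. x \<in> E - B \<Longrightarrow> (\<exists>K\<in>T. ball x (2 * h) \<subseteq> K) \<and> \<theta> < infdist x (grid_lines h)"
proof (cases "E = {}")
  case True
  then show ?thesis
    using that[of h0 1 "{}"] \<open>0 < h0\<close> \<open>0 < e\<close> by auto
next
  case False
  define F where "F = (\<Union>K\<in>T. frontier K)"
  have E_sets: "E \<in> sets lebesgue"
    using E(1) by (rule open_imp_sets_lebesgue)
  have "F \<noteq> {}"
    unfolding F_def using T False by (rule triangulation_edges_nonempty)
  moreover have "closed F" "negligible F"
    unfolding F_def using T by (auto intro: closed_triangulation_edges negligible_triangulation_edges)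
  ultimately obtain r where r: "0 < r" "measure lebesgue (E \<inter> {x. infdist x F \<le> r}) < e / 2"
    using measure_infdist_neighbourhood_small[OF E_sets E(2)] \<open>0 < e\<close> by (metis half_gt_zero)
  define h where "h = min h0 (r / 2)"
  have h: "0 < h" "h \<le> h0" "2 * h \<le> r"
    using r(1) \<open>0 < h0\<close> by (auto simp: h_def)
  obtain \<theta> where \<theta>: "0 < \<theta>" "measure lebesgue (E \<inter> {x. infdist x (grid_lines h) \<le> \<theta>}) < e / 2"
    using measure_infdist_neighbourhood_small[OF E_sets E(2) closed_grid_lines _ negligible_grid_lines]
      zero_in_grid_lines h(1) \<open>0 < e\<close> by (metis empty_iff half_gt_zero less_irrefl)
  define B1 where "B1 = E \<inter> {x. infdist x F \<le> r}"
  define B2 where "B2 = E \<inter> {x. infdist x (grid_lines h) \<le> \<theta>}"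
  define B where "B = B1 \<union> B2"
  have "closed {x. infdist x F \<le> r}" "closed {x::real^2. infdist x (grid_lines h) \<le> \<theta>}"
    by (intro closed_Collect_le continuous_intros)+
  then have "B1 \<in> sets lebesgue" "B2 \<in> sets lebesgue"
    unfolding B1_def B2_def using E_sets closed_imp_sets_lebesgue by blast+
  then have "B \<in> sets lebesgue" "measure lebesgue B < e"
    using measure_Un_le[of B1 lebesgue B2] r(2) \<theta>(2) unfolding B_def B1_def B2_def by auto
  moreover have "(\<exists>K\<in>T. ball x (2 * h) \<subseteq> K) \<and> \<theta> < infdist x (grid_lines h)" if "x \<in> E - B" for x
    using that h(3) T closure_subset unfolding B_def B1_def B2_def F_def
    by (auto intro!: triangulation_ball_subset)
  ultimately show ?thesis
    using that h(1,2) \<theta>(1) unfolding B_def B1_def B2_def by blast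
qed

lemma adapted_grid:
  fixes G :: "real^2 \<Rightarrow> real^'n^'m"
  assumes "triangulation T E" "open E" "bounded E" "continuous_on (closure E) G" "0 < \<rho>" "0 < e"
  obtains h \<theta> B where "0 < h" "0 < \<theta>" "B \<in> sets lebesgue" "B \<subseteq> E" "measure lebesgue B < e"
    "\<And>x y (M::real^'p^'n). x \<in> E \<Longrightarrow> y \<in> E \<Longrightarrow> dist x y < 2 * h \<Longrightarrow> norm M \<le> b \<Longrightarrow>
      norm (G x ** M - G y ** M) < \<rho>"
    "\<And>x. x \<in> E - B \<Longrightarrow> (\<exists>K\<in>T. ball x (2 * h) \<subseteq> K) \<and> \<theta> < infdist x (grid_lines h)"
proof -
  have "uniformly_continuous_on (closure E) G"
    using assms(3,4) by (intro compact_uniformly_continuous) simp_all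
  then obtain h0 where h0: "0 < h0" "\<And>x y (M::real^'p^'n). x \<in> closure E \<Longrightarrow> y \<in> closure E \<Longrightarrow>
      dist x y < h0 \<Longrightarrow> norm M \<le> b \<Longrightarrow> norm (G x ** M - G y ** M) < \<rho>"
    using uniformly_continuous_on_matrix_mult_right assms(5) by metis
  obtain h \<theta> B where grid: "0 < h" "h \<le> h0 / 2" "0 < \<theta>" "B \<in> sets lebesgue" "B \<subseteq> E"
      "measure lebesgue B < e"
    and good: "\<And>x. x \<in> E - B \<Longrightarrow> (\<exists>K\<in>T. ball x (2 * h) \<subseteq> K) \<and> \<theta> < infdist x (grid_lines h)"
    using triangulation_grid_exceptional_set[OF assms(1-3) half_gt_zero[OF h0(1)] assms(6)] by blast
  have "norm (G x ** M - G y ** M) < \<rho>"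
    if "x \<in> E" "y \<in> E" "dist x y < 2 * h" "norm M \<le> b" for x y and M :: "real^'p^'n"
  proof -
    have "dist x y < h0"
      using that(3) grid(2) by linarith
    then show ?thesis
      using h0(2) that(1,2,4) closure_subset by blast
  qed
  then show ?thesis
    by (rule that[OF grid(1,3-6) _ good])
qed

section \<open>The stored energy density\<close>

lemma W0_approx:
  assumes "W0 W A < \<infinity>" "0 < e"
  obtains \<xi> where "W (augm A \<xi>) < W0 W A + ennreal e"
proof -
  have "W0 W A \<noteq> \<infinity>"
    using assms(1) by simp
  then show ?thesis
    using INF_approx_ennreal[OF assms(2) W0_def[of W A]] that by blast
qed

locale stored_energy =
  fixes p :: real and W :: "real^3^3 \<Rightarrow> ennreal"
  assumes p_gt_1: "1 < p" and hyps_W: "hyps_W p W"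
begin

lemma W_continuous: "continuous_on UNIV W"
  and W_finite: "0 < det F \<Longrightarrow> W F < \<infinity>"
  and W_infinite: "det F \<le> 0 \<Longrightarrow> W F = \<infinity>"
  and W_coercive: "\<exists>C>0. \<forall>F. ennreal (C * norm F powr p - 1 / C) \<le> W F"
  and W_growth: "0 < \<delta> \<Longrightarrow> \<exists>c. \<forall>F. \<delta> \<le> det F \<longrightarrow> W F \<le> ennreal (c * (1 + norm F powr p))"
  using hyps_W unfolding hyps_W_def by blast+

lemma W_bounded_above:
  assumes "0 < d"
  obtains M where "0 < M" "\<And>F. d \<le> det F \<Longrightarrow> norm F \<le> r \<Longrightarrow> W F \<le> ennreal M"
proof -
  obtain c where c: "\<And>F. d \<le> det F \<Longrightarrow> W F \<le> ennreal (c * (1 + norm F powr p))"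
    using W_growth[OF assms] by blast
  show ?thesis
  proof (rule that)
    show "0 < \<bar>c\<bar> * (1 + \<bar>r\<bar> powr p) + 1"
      by (simp add: add_nonneg_pos)
    fix F :: "real^3^3" assume "d \<le> det F" "norm F \<le> r"
    have "norm F powr p \<le> \<bar>r\<bar> powr p"
      using \<open>norm F \<le> r\<close> p_gt_1 by (intro powr_mono2) auto
    then have "c * (1 + norm F powr p) \<le> \<bar>c\<bar> * (1 + \<bar>r\<bar> powr p) + 1"
      by (smt (verit) abs_ge_self abs_ge_zero mult_mono powr_ge_zero)
    then show "W F \<le> ennreal (\<bar>c\<bar> * (1 + \<bar>r\<bar> powr p) + 1)"
      using c[OF \<open>d \<le> det F\<close>] order_trans ennreal_leI by blast
  qed
qed

lemma W0_bounded_above: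
  assumes "0 < \<eta>"
  obtains M where "0 < M" "\<And>A. norm A \<le> a \<Longrightarrow> \<eta> \<le> norm (wedge A) \<Longrightarrow> W0 W A \<le> ennreal M"
proof -
  obtain M where M: "0 < M" "\<And>F. \<eta> \<le> det F \<Longrightarrow> norm F \<le> a + 1 \<Longrightarrow> W F \<le> ennreal M"
    using W_bounded_above[OF assms] by blast
  have "W0 W A \<le> ennreal M" if "norm A \<le> a" "\<eta> \<le> norm (wedge A)" for A
  proof -
    have "wedge A \<noteq> 0"
      using that(2) assms by auto
    then have "norm (sgn (wedge A)) = 1"
      by (simp add: norm_sgn)
    then have "norm (augm A (sgn (wedge A))) \<le> a + 1"
      using norm_augm_le[of A "sgn (wedge A)"] that(1) by linarith
    then have "W (augm A (sgn (wedge A))) \<le> ennreal M"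
      using M(2) that(2) by (simp add: det_augm_sgn_wedge)
    moreover have "W0 W A \<le> W (augm A (sgn (wedge A)))"
      unfolding W0_def by (rule INF_lower) simp
    ultimately show ?thesis by simp
  qed
  with M(1) that show ?thesis by blast
qed

lemma W_sublevel_bounded:
  obtains R where "0 < R" "\<And>F. W F \<le> ennreal M \<Longrightarrow> norm F \<le> R"
proof -
  obtain C where C: "0 < C" "\<And>F. ennreal (C * norm F powr p - 1 / C) \<le> W F"
    using W_coercive by blast
  define R where "R = ((\<bar>M\<bar> + 1 / C) / C) powr (1 / p)"
  have "0 < \<bar>M\<bar> + 1 / C"
    using C(1) by (simp add: add_nonneg_pos)
  then have "0 < R"
    unfolding R_def using C(1) by simp
  moreover have "norm F \<le> R" if "W F \<le> ennreal M" for F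
  proof -
    have "ennreal (C * norm F powr p - 1 / C) \<le> W F"
      by (rule C(2))
    also have "\<dots> \<le> ennreal \<bar>M\<bar>"
      using that ennreal_leI[OF abs_ge_self] by (rule order_trans)
    finally have "C * norm F powr p - 1 / C \<le> \<bar>M\<bar>"
      by (subst (asm) ennreal_le_iff) auto
    then have "norm F powr p \<le> (\<bar>M\<bar> + 1 / C) / C"
      using C(1) by (simp add: pos_le_divide_eq algebra_simps)
    then have "(norm F powr p) powr (1 / p) \<le> R"
      unfolding R_def using p_gt_1 by (intro powr_mono2) auto
    then show ?thesis
      using p_gt_1 by (simp add: powr_powr)
  qed
  ultimately show ?thesis
    using that by blast
qed

lemma W_sublevel_det_lower:
  obtains \<delta> where "0 < \<delta>" "\<And>F. W F \<le> ennreal M \<Longrightarrow> \<delta> \<le> det F"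
proof -
  define S where "S = {F. W F \<le> ennreal M}"
  obtain R where "\<And>F. W F \<le> ennreal M \<Longrightarrow> norm F \<le> R"
    using W_sublevel_bounded by metis
  then have "bounded S"
    unfolding S_def bounded_iff by blast
  moreover have "closed S"
    unfolding S_def by (rule closed_Collect_le[OF W_continuous]) simp
  ultimately have "compact S"
    by (simp add: compact_eq_bounded_closed)
  show ?thesis
  proof (cases "S = {}")
    case True
    then show ?thesis using that[of 1] unfolding S_def by auto
  next
    case False
    obtain F0 where F0: "F0 \<in> S" "\<And>F. F \<in> S \<Longrightarrow> det F0 \<le> det F"
      using continuous_attains_inf[OF \<open>compact S\<close> False continuous_on_det_3] by blast
    have "W F0 \<noteq> top"
      using neq_top_trans[OF ennreal_neq_top] F0(1) unfolding S_def by blast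
    then have "0 < det F0"
      using W_infinite[of F0] by force
    with F0 show ?thesis using that unfolding S_def by blast
  qed
qed

lemma continuous_on_enn2real_W:
  assumes "\<And>F. F \<in> K \<Longrightarrow> 0 < det F"
  shows "continuous_on K (\<lambda>F. enn2real (W F))"
  unfolding continuous_on_def
proof
  fix F assume "F \<in> K"
  then have "W F < top"
    using W_finite assms by simp
  moreover have "(W \<longlongrightarrow> W F) (at F within K)"
    using W_continuous by (metis continuous_on_def continuous_on_subset subset_UNIV \<open>F \<in> K\<close>)
  ultimately show "((\<lambda>F. enn2real (W F)) \<longlongrightarrow> enn2real (W F)) (at F within K)"
    by (intro tendsto_enn2real) (auto simp: ennreal_enn2real)
qed

lemma W_uniformly_continuous:
  assumes "0 < d" "0 < e"
  obtains \<rho> where "0 < \<rho>" "\<And>F F'. norm F \<le> r \<Longrightarrow> norm F' \<le> r \<Longrightarrow> d \<le> det F \<Longrightarrow>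
    norm (F - F') < \<rho> \<Longrightarrow> det F / 2 \<le> det F' \<and> W F' \<le> W F + ennreal e"
proof -
  have "uniformly_continuous_on (cball 0 r) (det :: real^3^3 \<Rightarrow> real)"
    by (rule compact_uniformly_continuous[OF continuous_on_det_3 compact_cball])
  then obtain \<rho>1 where \<rho>1: "0 < \<rho>1"
    "\<forall>F::real^3^3\<in>cball 0 r. \<forall>F'\<in>cball 0 r. dist F' F < \<rho>1 \<longrightarrow> dist (det F') (det F) < d / 2"
    unfolding uniformly_continuous_on_def using half_gt_zero[OF \<open>0 < d\<close>] by blast
  define K where "K = cball 0 r \<inter> {F::real^3^3. d / 2 \<le> det F}"
  have "compact K"
    unfolding K_def by (intro compact_Int_closed closed_Collect_le continuous_on_det_3) auto
  moreover have "continuous_on K (\<lambda>F. enn2real (W F))"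
    using \<open>0 < d\<close> unfolding K_def by (intro continuous_on_enn2real_W) auto
  ultimately obtain \<rho>2 where \<rho>2: "0 < \<rho>2"
    "\<And>F F'. F \<in> K \<Longrightarrow> F' \<in> K \<Longrightarrow> dist F' F < \<rho>2 \<Longrightarrow> dist (enn2real (W F')) (enn2real (W F)) < e"
    using compact_uniformly_continuous \<open>0 < e\<close> unfolding uniformly_continuous_on_def by metis
  show ?thesis
  proof (rule that[of "min \<rho>1 \<rho>2"])
    show "0 < min \<rho>1 \<rho>2"
      using \<rho>1(1) \<rho>2(1) by simp
    fix F F' :: "real^3^3"
    assume F: "norm F \<le> r" "norm F' \<le> r" "d \<le> det F" "norm (F - F') < min \<rho>1 \<rho>2"
    then have "dist (det F') (det F) < d / 2"
      using \<rho>1(2) by (auto simp: dist_norm norm_minus_commute)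
    then have det_F': "det F / 2 \<le> det F'"
      using F(3) unfolding dist_real_def by linarith
    then have "F \<in> K" "F' \<in> K"
      using F \<open>0 < d\<close> unfolding K_def by auto
    then have "dist (enn2real (W F')) (enn2real (W F)) < e"
      using \<rho>2(2) F(4) by (simp add: dist_norm norm_minus_commute)
    then have "ennreal (enn2real (W F')) \<le> ennreal (enn2real (W F) + e)"
      unfolding dist_real_def by (intro ennreal_leI) linarith
    moreover have "W F < top" "W F' < top"
      using \<open>F \<in> K\<close> \<open>F' \<in> K\<close> \<open>0 < d\<close> W_finite unfolding K_def by auto
    ultimately have "W F' \<le> W F + ennreal e"
      using \<open>0 < e\<close> by (simp add: ennreal_enn2real ennreal_plus)
    with det_F' show "det F / 2 \<le> det F' \<and> W F' \<le> W F + ennreal e" ..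
  qed
qed

end

(* Near-minimisers of W(A|-) for admissible A lie in the sublevel set {W \<le> M0 + 1}. *)
locale energy_levels = stored_energy +
  fixes \<eta> amax M0 R \<delta> :: real
  assumes \<eta>_pos: "0 < \<eta>" and M0_nonneg: "0 \<le> M0" and R_pos: "0 < R" and \<delta>_pos: "0 < \<delta>"
    and W0_le_M0: "\<And>A. norm A \<le> amax \<Longrightarrow> \<eta> / 2 \<le> norm (wedge A) \<Longrightarrow> W0 W A \<le> ennreal M0"
    and sublevel_bounds: "\<And>F. W F \<le> ennreal (M0 + 1) \<Longrightarrow> norm F \<le> R \<and> \<delta> \<le> det F"
begin

definition admissible :: "real^2^3 \<Rightarrow> bool" where
  "admissible A \<longleftrightarrow> norm A \<le> amax \<and> \<eta> / 2 \<le> norm (wedge A)"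

definition \<delta>1 :: real where "\<delta>1 = min (\<delta> / 3) \<eta>"

definition Rmax :: real where "Rmax = amax + R + 2"

definition \<beta> :: real where "\<beta> = max (R + 2) (4 / \<delta>1)"

lemma \<delta>1_pos: "0 < \<delta>1"
  using \<delta>_pos \<eta>_pos by (simp add: \<delta>1_def)

lemma \<beta>_pos: "0 < \<beta>"
  using \<delta>1_pos by (simp add: \<beta>_def less_max_iff_disj)

lemma \<beta>_bounds: "R + 2 \<le> \<beta>" "\<delta>1 / 4 \<le> t \<Longrightarrow> 1 / \<beta> \<le> t"
proof -
  show "R + 2 \<le> \<beta>"
    by (simp add: \<beta>_def)
  assume "\<delta>1 / 4 \<le> t"
  moreover have "1 / \<beta> \<le> 1 / (4 / \<delta>1)"
    using \<delta>1_pos \<beta>_pos by (intro divide_left_mono mult_pos_pos) (auto simp: \<beta>_def)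
  ultimately show "1 / \<beta> \<le> t"
    by simp
qed

lemma admissible_matrix_mult:
  assumes "norm (G ** M) \<le> amax" "\<eta> \<le> norm (wedge G)" "1 / 2 \<le> det M"
  shows "admissible (G ** M)"
proof -
  have "(1 / 2) * \<eta> \<le> \<bar>det M\<bar> * norm (wedge G)"
    using assms(2,3) \<eta>_pos by (intro mult_mono) auto
  then show ?thesis
    using assms(1) by (simp add: admissible_def wedge_matrix_mult)
qed

lemma near_minimizer_bounds:
  assumes "admissible A" "e \<le> 1" "W (augm A \<xi>) < W0 W A + ennreal e"
  shows "norm (augm A \<xi>) \<le> R \<and> \<delta> \<le> det (augm A \<xi>)"
proof (rule sublevel_bounds)
  have "W (augm A \<xi>) \<le> W0 W A + ennreal e"
    using assms(3) by simp
  also have "\<dots> \<le> ennreal M0 + ennreal 1"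
    using W0_le_M0 assms(1,2) unfolding admissible_def by (intro add_mono ennreal_leI) auto
  finally show "W (augm A \<xi>) \<le> ennreal (M0 + 1)"
    using M0_nonneg by (simp add: ennreal_plus)
qed

lemma near_minimizer_exists:
  assumes "admissible A" "0 < e"
  obtains \<xi> where "W (augm A \<xi>) < W0 W A + ennreal e"
proof (rule W0_approx[OF _ assms(2)])
  have "W0 W A \<le> ennreal M0"
    using W0_le_M0 assms(1) unfolding admissible_def by blast
  then show "W0 W A < \<infinity>"
    by (rule le_less_trans) simp
qed

lemma blend_bounds:
  assumes "norm \<xi> \<le> R" "\<delta> / 3 \<le> det (augm G \<xi>)" "\<eta> \<le> norm (wedge G)" "0 \<le> w" "w \<le> 1"
  shows "norm ((1 - w) *\<^sub>R sgn (wedge G) + w *\<^sub>R \<xi>) \<le> R + 1 \<and>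
    \<delta>1 \<le> det (augm G ((1 - w) *\<^sub>R sgn (wedge G) + w *\<^sub>R \<xi>))"
proof
  have "norm ((1 - w) *\<^sub>R sgn (wedge G) + w *\<^sub>R \<xi>) \<le> (1 - w) * norm (sgn (wedge G)) + w * norm \<xi>"
    using norm_triangle_ineq[of "(1 - w) *\<^sub>R sgn (wedge G)" "w *\<^sub>R \<xi>"] assms(4,5) by simp
  also have "\<dots> \<le> 1 * 1 + 1 * R"
    using assms(1,4,5) by (intro add_mono mult_mono) (auto simp: norm_sgn)
  finally show "norm ((1 - w) *\<^sub>R sgn (wedge G) + w *\<^sub>R \<xi>) \<le> R + 1"
    by simp
  have "(1 - w) * \<delta>1 + w * \<delta>1 \<le> (1 - w) * det (augm G (sgn (wedge G))) + w * det (augm G \<xi>)"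
    using assms(2-5) by (intro add_mono mult_left_mono) (auto simp: \<delta>1_def det_augm_sgn_wedge)
  then show "\<delta>1 \<le> det (augm G ((1 - w) *\<^sub>R sgn (wedge G) + w *\<^sub>R \<xi>))"
    unfolding det_augm_blend by (simp add: algebra_simps)
qed

end

lemma (in stored_energy) energy_levels_exist:
  assumes "0 < \<eta>"
  shows "\<exists>M0 R \<delta>. energy_levels p W \<eta> amax M0 R \<delta>"
proof -
  obtain M0 where M0: "0 < M0" "\<And>A. norm A \<le> amax \<Longrightarrow> \<eta> / 2 \<le> norm (wedge A) \<Longrightarrow> W0 W A \<le> ennreal M0"
    using W0_bounded_above[of "\<eta> / 2"] assms by (metis half_gt_zero)
  obtain R where R: "0 < R" "\<And>F. W F \<le> ennreal (M0 + 1) \<Longrightarrow> norm F \<le> R"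
    using W_sublevel_bounded by metis
  obtain \<delta> where \<delta>: "0 < \<delta>" "\<And>F. W F \<le> ennreal (M0 + 1) \<Longrightarrow> \<delta> \<le> det F"
    using W_sublevel_det_lower by metis
  have "energy_levels p W \<eta> amax M0 R \<delta>"
    using M0 R \<delta> assms by unfold_locales auto
  then show ?thesis by blast
qed

section \<open>The recovery construction\<close>

locale recovery_tolerance = energy_levels +
  fixes \<epsilon>1 \<rho> :: real
  assumes \<epsilon>1_pos: "0 < \<epsilon>1" and \<epsilon>1_le_1: "\<epsilon>1 \<le> 1" and \<rho>_pos: "0 < \<rho>"
    and W_perturb: "\<And>F F'. norm F \<le> Rmax \<Longrightarrow> norm F' \<le> Rmax \<Longrightarrow> \<delta>1 / 2 \<le> det F \<Longrightarrow>
      norm (F - F') < \<rho> \<Longrightarrow> det F / 2 \<le> det F' \<and> W F' \<le> W F + ennreal \<epsilon>1"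
begin

lemma augm_perturb:
  assumes "norm A' \<le> amax" "norm (augm A \<xi>) \<le> R" "\<delta> \<le> det (augm A \<xi>)" "norm (A - A') < \<rho>"
  shows "\<delta> / 2 \<le> det (augm A' \<xi>) \<and> W (augm A' \<xi>) \<le> W (augm A \<xi>) + ennreal \<epsilon>1"
proof -
  have "norm \<xi> \<le> R"
    using norm_le_norm_augm assms(2) by (rule order_trans)
  then have "norm (augm A' \<xi>) \<le> Rmax"
    using norm_augm_le[of A' \<xi>] assms(1) by (simp add: Rmax_def)
  moreover have "norm (augm A \<xi>) \<le> Rmax"
    using assms(1,2) norm_ge_zero[of A'] unfolding Rmax_def by linarith
  moreover have "\<delta>1 / 2 \<le> det (augm A \<xi>)"
    using assms(3) \<delta>_pos by (simp add: \<delta>1_def)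
  moreover have "norm (augm A \<xi> - augm A' \<xi>) < \<rho>"
    using norm_augm_diff_le[of A \<xi> A' \<xi>] assms(4) by simp
  ultimately show ?thesis
    using W_perturb assms(3) by fastforce
qed

lemma W0_perturb:
  assumes "admissible A" "admissible A'" "norm (A - A') < \<rho>"
  shows "W0 W A' \<le> W0 W A + ennreal \<epsilon>1"
proof (rule ennreal_le_epsilon)
  fix e :: real assume "0 < e"
  then obtain \<zeta> where \<zeta>: "W (augm A \<zeta>) < W0 W A + ennreal (min e 1)"
    using near_minimizer_exists[OF assms(1)] by (metis min_less_iff_conj zero_less_one)
  then have "norm (augm A \<zeta>) \<le> R \<and> \<delta> \<le> det (augm A \<zeta>)"
    using near_minimizer_bounds[OF assms(1) min.cobounded2] by blast
  then have "W (augm A' \<zeta>) \<le> W (augm A \<zeta>) + ennreal \<epsilon>1"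
    using augm_perturb assms(2,3) unfolding admissible_def by blast
  also have "\<dots> \<le> W0 W A + ennreal e + ennreal \<epsilon>1"
  proof (rule add_right_mono)
    have "ennreal (min e 1) \<le> ennreal e"
      by (rule ennreal_leI) simp
    then show "W (augm A \<zeta>) \<le> W0 W A + ennreal e"
      using \<zeta> by (meson add_left_mono less_imp_le order_trans)
  qed
  finally have "W (augm A' \<zeta>) \<le> W0 W A + ennreal \<epsilon>1 + ennreal e"
    by (simp add: ac_simps)
  moreover have "W0 W A' \<le> W (augm A' \<zeta>)"
    unfolding W0_def by (rule INF_lower) simp
  ultimately show "W0 W A' \<le> W0 W A + ennreal \<epsilon>1 + ennreal e"
    by simp
qed

lemma near_minimizer_perturb:
  assumes "admissible A" "admissible A'" "norm (A - A') < \<rho>" "W (augm A \<xi>) < W0 W A + ennreal \<epsilon>1"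
  shows "norm \<xi> \<le> R \<and> \<delta> / 2 \<le> det (augm A' \<xi>) \<and> W (augm A' \<xi>) \<le> W0 W A' + ennreal (3 * \<epsilon>1)"
proof -
  have bounds: "norm (augm A \<xi>) \<le> R \<and> \<delta> \<le> det (augm A \<xi>)"
    using near_minimizer_bounds[OF assms(1) \<epsilon>1_le_1 assms(4)] .
  then have perturbed: "\<delta> / 2 \<le> det (augm A' \<xi>) \<and> W (augm A' \<xi>) \<le> W (augm A \<xi>) + ennreal \<epsilon>1"
    using augm_perturb assms(2,3) unfolding admissible_def by blast
  have "W (augm A' \<xi>) \<le> W0 W A + ennreal \<epsilon>1 + ennreal \<epsilon>1"
    using perturbed assms(4) by (meson add_right_mono less_imp_le order_trans)
  also have "\<dots> \<le> W0 W A' + ennreal \<epsilon>1 + ennreal \<epsilon>1 + ennreal \<epsilon>1"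
    using W0_perturb[OF assms(2,1)] assms(3) by (simp add: norm_minus_commute add_right_mono)
  also have "\<dots> = W0 W A' + ennreal (3 * \<epsilon>1)"
    using \<epsilon>1_pos by (simp add: ennreal_plus[symmetric] ac_simps del: ennreal_plus)
  finally show ?thesis
    using bounds perturbed norm_le_norm_augm order_trans by blast
qed

lemma approximation_bounds:
  assumes "norm A \<le> amax" "norm \<phi>0 \<le> R + 1" "\<delta>1 / 2 \<le> det (augm A \<phi>0)" "norm (\<phi> - \<phi>0) < min 1 \<rho>"
  shows "norm \<phi> \<le> R + 2 \<and> norm (augm A \<phi>) \<le> Rmax \<and> \<delta>1 / 4 \<le> det (augm A \<phi>) \<and>
    W (augm A \<phi>) \<le> W (augm A \<phi>0) + ennreal \<epsilon>1"
proof -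
  have "norm \<phi> \<le> R + 2"
    using norm_triangle_sub[of \<phi> \<phi>0] assms(2,4) by simp
  moreover have "norm (augm A \<phi>) \<le> Rmax" "norm (augm A \<phi>0) \<le> Rmax"
    using norm_augm_le[of A \<phi>] norm_augm_le[of A \<phi>0] assms(1,2) \<open>norm \<phi> \<le> R + 2\<close>
    unfolding Rmax_def by linarith+
  moreover have "norm (augm A \<phi>0 - augm A \<phi>) < \<rho>"
    using norm_augm_diff_le[of A \<phi>0 A \<phi>] assms(4) by (simp add: norm_minus_commute)
  ultimately show ?thesis
    using W_perturb[of "augm A \<phi>0" "augm A \<phi>"] assms(3) by fastforce
qed

lemma pointwise_recovery:
  fixes Gx Gy :: "real^2^3" and M Mx :: "real^2^2"
  assumes norms: "norm (Gy ** M) \<le> amax" "norm (Gx ** M) \<le> amax" "norm (Gx ** Mx) \<le> amax"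
    and wedges: "\<eta> \<le> norm (wedge Gy)" "\<eta> \<le> norm (wedge Gx)"
    and dets: "1 / 2 \<le> det M \<and> det M \<le> 3 / 2" "1 / 2 \<le> det Mx"
    and close: "norm (Gy ** M - Gx ** M) < \<rho>"
    and near_min: "W (augm (Gy ** M) \<xi>) < W0 W (Gy ** M) + ennreal \<epsilon>1"
    and w: "0 \<le> w \<and> w \<le> 1"
    and approx: "norm (\<phi> - ((1 - w) *\<^sub>R sgn (wedge Gx) + w *\<^sub>R \<xi>)) < min 1 \<rho>"
  shows "norm \<phi> \<le> R + 2 \<and> norm (augm (Gx ** Mx) \<phi>) \<le> Rmax \<and> \<delta>1 / 4 \<le> det (augm (Gx ** Mx) \<phi>)"
    and "Mx = M \<Longrightarrow> w = 1 \<Longrightarrow> W (augm (Gx ** Mx) \<phi>) \<le> W0 W (Gx ** Mx) + ennreal (4 * \<epsilon>1)"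
proof -
  define \<phi>0 where "\<phi>0 = (1 - w) *\<^sub>R sgn (wedge Gx) + w *\<^sub>R \<xi>"
  have "admissible (Gy ** M)" "admissible (Gx ** M)"
    using admissible_matrix_mult norms wedges dets by auto
  then have \<xi>: "norm \<xi> \<le> R" "\<delta> / 2 \<le> det (augm (Gx ** M) \<xi>)"
    "W (augm (Gx ** M) \<xi>) \<le> W0 W (Gx ** M) + ennreal (3 * \<epsilon>1)"
    using near_minimizer_perturb close near_min by blast+
  have "\<delta> / 2 \<le> det M * det (augm Gx \<xi>)"
    using \<xi>(2) by (simp add: det_augm_matrix_mult)
  then have "(\<delta> / 2) / (3 / 2) \<le> det (augm Gx \<xi>)"
    by (rule divide_le_of_le_mult) (use dets(1) \<delta>_pos in auto)
  then have "\<delta> / 3 \<le> det (augm Gx \<xi>)"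
    by simp
  then have \<phi>0: "norm \<phi>0 \<le> R + 1" "\<delta>1 \<le> det (augm Gx \<phi>0)"
    using blend_bounds \<xi>(1) wedges(2) w unfolding \<phi>0_def by blast+
  have "1 / 2 * \<delta>1 \<le> det Mx * det (augm Gx \<phi>0)"
    using dets(2) \<phi>0(2) \<delta>1_pos by (intro mult_mono) auto
  then have "\<delta>1 / 2 \<le> det (augm (Gx ** Mx) \<phi>0)"
    by (simp add: det_augm_matrix_mult)
  then have \<phi>: "norm \<phi> \<le> R + 2 \<and> norm (augm (Gx ** Mx) \<phi>) \<le> Rmax \<and> \<delta>1 / 4 \<le> det (augm (Gx ** Mx) \<phi>) \<and>
      W (augm (Gx ** Mx) \<phi>) \<le> W (augm (Gx ** Mx) \<phi>0) + ennreal \<epsilon>1"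
    using approximation_bounds norms(3) \<phi>0(1) approx unfolding \<phi>0_def by blast
  then show "norm \<phi> \<le> R + 2 \<and> norm (augm (Gx ** Mx) \<phi>) \<le> Rmax \<and> \<delta>1 / 4 \<le> det (augm (Gx ** Mx) \<phi>)"
    by blast
  assume "Mx = M" "w = 1"
  then have "W (augm (Gx ** Mx) \<phi>) \<le> W0 W (Gx ** Mx) + ennreal (3 * \<epsilon>1) + ennreal \<epsilon>1"
    using \<phi> \<xi>(3) unfolding \<phi>0_def by (auto intro: order_trans add_right_mono)
  also have "\<dots> = W0 W (Gx ** Mx) + ennreal (4 * \<epsilon>1)"
    using \<epsilon>1_pos by (simp add: ennreal_plus[symmetric] ac_simps del: ennreal_plus)
  finally show "W (augm (Gx ** Mx) \<phi>) \<le> W0 W (Gx ** Mx) + ennreal (4 * \<epsilon>1)" .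
qed

lemma smooth_cellwise_field:
  fixes G :: "real^2 \<Rightarrow> real^2^3" and \<Psi> :: "real^2 \<Rightarrow> real^2^2"
  assumes "bounded E" "continuous_on (closure E) G" "\<And>x. x \<in> closure E \<Longrightarrow> \<eta> \<le> norm (wedge (G x))"
    and admissible: "\<And>y. y \<in> E \<Longrightarrow> admissible (G y ** \<Psi> y)"
  obtains \<xi> \<phi> where "\<And>x. x \<in> E \<Longrightarrow> \<exists>y\<in>E. grid_cell h y = grid_cell h x \<and>
      W (augm (G y ** \<Psi> y) (\<xi> (grid_cell h x))) < W0 W (G y ** \<Psi> y) + ennreal \<epsilon>1"
    and "C_inf \<phi>"
    and "\<And>x. x \<in> closure E \<Longrightarrow> norm (\<phi> x - grid_blend h \<theta> (\<lambda>x. sgn (wedge (G x))) \<xi> x) < min 1 \<rho>"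
proof -
  have "\<exists>\<zeta>. W (augm (G y ** \<Psi> y) \<zeta>) < W0 W (G y ** \<Psi> y) + ennreal \<epsilon>1" if "y \<in> E" for y
    using near_minimizer_exists[OF admissible[OF that] \<epsilon>1_pos] by metis
  then obtain \<xi> where cells: "\<And>x. x \<in> E \<Longrightarrow> \<exists>y\<in>E. grid_cell h y = grid_cell h x \<and>
      W (augm (G y ** \<Psi> y) (\<xi> (grid_cell h x))) < W0 W (G y ** \<Psi> y) + ennreal \<epsilon>1"
    and default: "\<And>k. k \<notin> grid_cell h ` E \<Longrightarrow> \<xi> k = 0"
    using cellwise_choice[where c = "grid_cell h" and z = 0
        and P = "\<lambda>y \<zeta>. W (augm (G y ** \<Psi> y) \<zeta>) < W0 W (G y ** \<Psi> y) + ennreal \<epsilon>1"] by blast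
  have \<xi>_bound: "norm (\<xi> k) \<le> R" for k
  proof (cases "k \<in> grid_cell h ` E")
    case True
    then obtain y where "y \<in> E" "W (augm (G y ** \<Psi> y) (\<xi> k)) < W0 W (G y ** \<Psi> y) + ennreal \<epsilon>1"
      using cells by blast
    then have "norm (augm (G y ** \<Psi> y) (\<xi> k)) \<le> R"
      using near_minimizer_bounds[OF admissible \<epsilon>1_le_1] by blast
    then show ?thesis
      using norm_le_norm_augm order_trans by blast
  qed (use default R_pos in simp)
  have normal: "continuous_on (closure E) (\<lambda>x. sgn (wedge (G x)))"
    using assms(2,3) \<eta>_pos unfolding column_def
    by (intro continuous_on_sgn continuous_on_cross continuous_intros) force+
  have "compact (closure E)"
    using assms(1) by simp
  then obtain \<phi> where "C_inf \<phi>"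
    "\<And>x. x \<in> closure E \<Longrightarrow> norm (\<phi> x - grid_blend h \<theta> (\<lambda>x. sgn (wedge (G x))) \<xi> x) < min 1 \<rho>"
    using smooth_approximation_grid_blend[where h = h and \<theta> = \<theta> and \<xi> = \<xi> and e = "min 1 \<rho>",
        OF _ normal \<xi>_bound] \<rho>_pos by auto
  with cells that show ?thesis
    by blast
qed

lemma recovery_field:
  fixes G :: "real^2 \<Rightarrow> real^2^3" and \<Psi> :: "real^2 \<Rightarrow> real^2^2"
  assumes E: "open E" "bounded E"
    and G: "continuous_on (closure E) G" "\<And>x. x \<in> closure E \<Longrightarrow> \<eta> \<le> norm (wedge (G x))"
    and T: "triangulation T E" "pw_const T E \<Psi>"
    and \<Psi>: "\<And>x. x \<in> E \<Longrightarrow> 1 / 2 \<le> det (\<Psi> x) \<and> det (\<Psi> x) \<le> 3 / 2" "\<And>x. x \<in> E \<Longrightarrow> norm (\<Psi> x) \<le> b"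
    and products: "\<And>x y. x \<in> E \<Longrightarrow> y \<in> E \<Longrightarrow> norm (G x ** \<Psi> y) \<le> amax"
    and "0 < e"
  obtains \<phi> B where "C_inf \<phi>" "B \<in> sets lebesgue" "B \<subseteq> E" "measure lebesgue B < e"
    "\<And>x. x \<in> E \<Longrightarrow> norm (\<phi> x) \<le> R + 2 \<and> norm (augm (G x ** \<Psi> x) (\<phi> x)) \<le> Rmax \<and>
      \<delta>1 / 4 \<le> det (augm (G x ** \<Psi> x) (\<phi> x))"
    "\<And>x. x \<in> E - B \<Longrightarrow> W (augm (G x ** \<Psi> x) (\<phi> x)) \<le> W0 W (G x ** \<Psi> x) + ennreal (4 * \<epsilon>1)"
proof -
  obtain h \<theta> B where grid: "0 < h" "0 < \<theta>" "B \<in> sets lebesgue" "B \<subseteq> E" "measure lebesgue B < e"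
    and close: "\<And>x y (M::real^2^2). x \<in> E \<Longrightarrow> y \<in> E \<Longrightarrow> dist x y < 2 * h \<Longrightarrow>
      norm M \<le> b \<Longrightarrow> norm (G x ** M - G y ** M) < \<rho>"
    and good: "\<And>x. x \<in> E - B \<Longrightarrow> (\<exists>K\<in>T. ball x (2 * h) \<subseteq> K) \<and> \<theta> < infdist x (grid_lines h)"
    using adapted_grid[OF T(1) E G(1) \<rho>_pos \<open>0 < e\<close>] by blast
  have G_E: "\<And>x. x \<in> E \<Longrightarrow> \<eta> \<le> norm (wedge (G x))"
    using G(2) closure_subset by blast
  then have admissible: "admissible (G y ** \<Psi> y)" if "y \<in> E" for y
    using admissible_matrix_mult products \<Psi>(1) that by blast
  obtain \<xi> \<phi> where cells: "\<And>x. x \<in> E \<Longrightarrow> \<exists>y\<in>E. grid_cell h y = grid_cell h x \<and>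
      W (augm (G y ** \<Psi> y) (\<xi> (grid_cell h x))) < W0 W (G y ** \<Psi> y) + ennreal \<epsilon>1"
    and \<phi>: "C_inf \<phi>"
      "\<And>x. x \<in> closure E \<Longrightarrow> norm (\<phi> x - grid_blend h \<theta> (\<lambda>x. sgn (wedge (G x))) \<xi> x) < min 1 \<rho>"
    using smooth_cellwise_field[OF E(2) G admissible] by blast
  have "norm (\<phi> x) \<le> R + 2 \<and> norm (augm (G x ** \<Psi> x) (\<phi> x)) \<le> Rmax \<and>
      \<delta>1 / 4 \<le> det (augm (G x ** \<Psi> x) (\<phi> x))"
    and "x \<notin> B \<Longrightarrow> W (augm (G x ** \<Psi> x) (\<phi> x)) \<le> W0 W (G x ** \<Psi> x) + ennreal (4 * \<epsilon>1)"
    if x: "x \<in> E" for x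
  proof -
    obtain y where y: "y \<in> E" "grid_cell h x = grid_cell h y"
      and near_min: "W (augm (G y ** \<Psi> y) (\<xi> (grid_cell h x))) < W0 W (G y ** \<Psi> y) + ennreal \<epsilon>1"
      using cells[OF x] by metis
    then have "dist x y < 2 * h"
      using dist_lt_if_same_grid_cell[OF grid(1) y(2)] by simp
    then have "norm (G y ** \<Psi> y - G x ** \<Psi> y) < \<rho>"
      using close[of y x "\<Psi> y"] x y(1) \<Psi>(2) by (simp add: dist_commute)
    have approx: "norm (\<phi> x - ((1 - grid_weight h \<theta> x) *\<^sub>R sgn (wedge (G x)) +
        grid_weight h \<theta> x *\<^sub>R \<xi> (grid_cell h x))) < min 1 \<rho>"
      using \<phi>(2) closure_subset x unfolding grid_blend_def by blast
    note estimate = pointwise_recovery[OF products[OF y(1) y(1)] products[OF x y(1)] products[OF x x]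
        G_E[OF y(1)] G_E[OF x] \<Psi>(1)[OF y(1)] conjunct1[OF \<Psi>(1)[OF x]]
        \<open>norm (G y ** \<Psi> y - G x ** \<Psi> y) < \<rho>\<close> near_min grid_weight_bounds[OF grid(2)] approx]
    show "norm (\<phi> x) \<le> R + 2 \<and> norm (augm (G x ** \<Psi> x) (\<phi> x)) \<le> Rmax \<and>
        \<delta>1 / 4 \<le> det (augm (G x ** \<Psi> x) (\<phi> x))"
      by (rule estimate(1))
    assume "x \<notin> B"
    then obtain K where "K \<in> T" "ball x (2 * h) \<subseteq> K" "grid_weight h \<theta> x = 1"
      using good x grid_weight_eq_1[OF grid(2) less_imp_le] by blast
    then show "W (augm (G x ** \<Psi> x) (\<phi> x)) \<le> W0 W (G x ** \<Psi> x) + ennreal (4 * \<epsilon>1)"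
      using estimate(2) pw_const_eq_on_ball[OF T] x y(1) \<open>dist x y < 2 * h\<close> by metis
  qed
  then show ?thesis
    using that[OF \<phi>(1) grid(3-5)] by blast
qed

end

lemma (in energy_levels) recovery:
  fixes G :: "real^2 \<Rightarrow> real^2^3" and \<Psi> :: "real^2 \<Rightarrow> real^2^2"
  assumes E: "open E" "bounded E"
    and G: "continuous_on (closure E) G" "\<And>x. x \<in> closure E \<Longrightarrow> \<eta> \<le> norm (wedge (G x))"
    and T: "triangulation T E" "pw_const T E \<Psi>"
    and \<epsilon>: "0 < \<epsilon>" "\<epsilon> < 1 / 2" and det_\<Psi>: "\<And>x. x \<in> E \<Longrightarrow> \<bar>det (\<Psi> x) - 1\<bar> \<le> \<epsilon>"
    and \<Psi>: "\<And>x. x \<in> E \<Longrightarrow> norm (\<Psi> x) \<le> b"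
    and products: "\<And>x y. x \<in> E \<Longrightarrow> y \<in> E \<Longrightarrow> norm (G x ** \<Psi> y) \<le> amax"
  shows "\<exists>\<phi>. C_inf \<phi> \<and> (\<forall>x\<in>E. norm (\<phi> x) \<le> \<beta>) \<and>
    (\<forall>x\<in>E. 1 / \<beta> \<le> det (augm (G x ** \<Psi> x) (\<phi> x))) \<and>
    (\<integral>\<^sup>+ x\<in>E. W (augm (G x ** \<Psi> x) (\<phi> x)) \<partial>lebesgue)
      \<le> (\<integral>\<^sup>+ x\<in>E. W0 W (G x ** \<Psi> x) \<partial>lebesgue) + ennreal \<epsilon>"
proof -
  obtain Mmax where Mmax: "0 < Mmax" "\<And>F. \<delta>1 / 4 \<le> det F \<Longrightarrow> norm F \<le> Rmax \<Longrightarrow> W F \<le> ennreal Mmax"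
    using W_bounded_above[of "\<delta>1 / 4"] \<delta>1_pos by auto
  have E_lmeasurable: "E \<in> lmeasurable"
    using E by (rule lmeasurable_open[rotated])
  define m where "m = measure lebesgue E"
  define \<epsilon>1 where "\<epsilon>1 = \<epsilon> / (8 * (m + 1))"
  have "0 \<le> m"
    by (simp add: m_def)
  then have "0 < \<epsilon>1" "\<epsilon>1 \<le> 1" "4 * \<epsilon>1 * measure lebesgue E \<le> \<epsilon> / 2"
    using \<epsilon> unfolding \<epsilon>1_def m_def[symmetric] by (auto simp: field_simps)
  obtain \<rho> where "0 < \<rho>" "\<And>F F'. norm F \<le> Rmax \<Longrightarrow> norm F' \<le> Rmax \<Longrightarrow> \<delta>1 / 2 \<le> det F \<Longrightarrow>
      norm (F - F') < \<rho> \<Longrightarrow> det F / 2 \<le> det F' \<and> W F' \<le> W F + ennreal \<epsilon>1"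
    using W_uniformly_continuous[of "\<delta>1 / 2" \<epsilon>1] \<delta>1_pos \<open>0 < \<epsilon>1\<close> by auto
  then interpret recovery_tolerance p W \<eta> amax M0 R \<delta> \<epsilon>1 \<rho>
    using \<open>0 < \<epsilon>1\<close> \<open>\<epsilon>1 \<le> 1\<close> by unfold_locales auto
  have "1 / 2 \<le> det (\<Psi> x) \<and> det (\<Psi> x) \<le> 3 / 2" if "x \<in> E" for x
    using det_\<Psi>[OF that] \<epsilon>(2) by (auto simp: abs_le_iff)
  then obtain \<phi> B where \<phi>: "C_inf \<phi>" and B: "B \<in> sets lebesgue" "B \<subseteq> E" "measure lebesgue B < \<epsilon> / (2 * Mmax)"
    and bounds: "\<And>x. x \<in> E \<Longrightarrow> norm (\<phi> x) \<le> R + 2 \<and> norm (augm (G x ** \<Psi> x) (\<phi> x)) \<le> Rmax \<and>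
      \<delta>1 / 4 \<le> det (augm (G x ** \<Psi> x) (\<phi> x))"
    and good: "\<And>x. x \<in> E - B \<Longrightarrow> W (augm (G x ** \<Psi> x) (\<phi> x)) \<le> W0 W (G x ** \<Psi> x) + ennreal (4 * \<epsilon>1)"
    using recovery_field[OF E G T _ \<Psi> products, of "\<epsilon> / (2 * Mmax)"] \<epsilon>(1) Mmax(1) by auto
  have "(\<integral>\<^sup>+ x\<in>E. W (augm (G x ** \<Psi> x) (\<phi> x)) \<partial>lebesgue) \<le> (\<integral>\<^sup>+ x\<in>E. W0 W (G x ** \<Psi> x) \<partial>lebesgue) +
      ennreal (4 * \<epsilon>1 * measure lebesgue E + Mmax * measure lebesgue B)"
    using E_lmeasurable B bounds Mmax good \<open>0 < \<epsilon>1\<close>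
    by (intro nn_set_integral_le_exceptional_set) (auto simp: mult.assoc)
  also have "\<dots> \<le> (\<integral>\<^sup>+ x\<in>E. W0 W (G x ** \<Psi> x) \<partial>lebesgue) + ennreal \<epsilon>"
  proof (intro add_left_mono ennreal_leI)
    have "Mmax * measure lebesgue B \<le> \<epsilon> / 2"
      using B(3) Mmax(1) by (simp add: field_simps)
    then show "4 * \<epsilon>1 * measure lebesgue E + Mmax * measure lebesgue B \<le> \<epsilon>"
      using \<open>4 * \<epsilon>1 * measure lebesgue E \<le> \<epsilon> / 2\<close> by linarith
  qed
  finally show ?thesis
    using \<phi> bounds \<beta>_bounds by (intro exI[of _ \<phi>]) (auto intro: order_trans add_left_mono)
qed

definition recovery_bound :: "(real^3^3 \<Rightarrow> ennreal) \<Rightarrow> real \<Rightarrow> real \<Rightarrow> real \<Rightarrow> real \<Rightarrow> bool" where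
  "recovery_bound W \<eta> a b \<beta> \<longleftrightarrow>
    (\<forall>(E :: (real^2) set) (G :: real^2 \<Rightarrow> real^2^3) (\<epsilon>::real) T (\<Psi> :: real^2 \<Rightarrow> real^2^2).
       open E \<and> bounded E \<and> continuous_on (closure E) G \<and>
       (\<forall>x\<in>closure E. \<eta> \<le> norm (wedge (G x))) \<and>
       0 < \<epsilon> \<and> \<epsilon> < 1/2 \<and> triangulation T E \<and> pw_const T E \<Psi> \<and>
       (\<forall>x\<in>E. \<bar>det (\<Psi> x) - 1\<bar> \<le> \<epsilon>) \<and> (\<forall>x\<in>E. norm (G x) \<le> a) \<and> (\<forall>x\<in>E. norm (\<Psi> x) \<le> b)
     \<longrightarrow> (\<exists>\<phi> :: real^2 \<Rightarrow> real^3. C_inf \<phi> \<and>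
            (\<forall>x\<in>E. norm (\<phi> x) \<le> \<beta>) \<and>
            (\<forall>x\<in>E. 1 / \<beta> \<le> det (augm (G x ** \<Psi> x) (\<phi> x))) \<and>
            (\<integral>\<^sup>+ x\<in>E. W (augm (G x ** \<Psi> x) (\<phi> x)) \<partial>lebesgue)
              \<le> (\<integral>\<^sup>+ x\<in>E. W0 W (G x ** \<Psi> x) \<partial>lebesgue) + ennreal \<epsilon>))"

lemma (in stored_energy) recovery_bound_exists:
  assumes "0 < \<eta>"
  shows "\<exists>\<beta>>0. recovery_bound W \<eta> a b \<beta>"
proof -
  obtain M0 R \<delta> where "energy_levels p W \<eta> (\<bar>a\<bar> * \<bar>b\<bar>) M0 R \<delta>"
    using energy_levels_exist[OF assms] by blast
  then interpret energy_levels p W \<eta> "\<bar>a\<bar> * \<bar>b\<bar>" M0 R \<delta> .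
  have "norm (G x ** \<Psi> y) \<le> \<bar>a\<bar> * \<bar>b\<bar>"
    if "norm (G x) \<le> a" "norm (\<Psi> y) \<le> b" for G :: "real^2 \<Rightarrow> real^2^3" and \<Psi> :: "real^2 \<Rightarrow> real^2^2" and x y
    using norm_matrix_mult_le[of "G x" "\<Psi> y"] that by (smt (verit) abs_ge_self mult_mono norm_ge_zero)
  then have "recovery_bound W \<eta> a b \<beta>"
    unfolding recovery_bound_def by (auto intro!: recovery)
  with \<beta>_pos show ?thesis by blast
qed

lemma norm_le_SUP_if_continuous_on_closure:
  fixes f :: "'a::euclidean_space \<Rightarrow> 'b::real_normed_vector"
  assumes "bounded E" "continuous_on (closure E) f" "x \<in> E"
  shows "norm (f x) \<le> (SUP x\<in>E. norm (f x))"
proof (rule cSUP_upper[OF assms(3)])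
  have "bounded (f ` closure E)"
    using assms(1,2) by (intro compact_imp_bounded compact_continuous_image) auto
  then obtain B where "\<And>y. y \<in> closure E \<Longrightarrow> norm (f y) \<le> B"
    unfolding bounded_iff by blast
  then show "bdd_above ((\<lambda>x. norm (f x)) ` E)"
    using closure_subset by (intro bdd_aboveI2[of _ _ B]) blast
qed

lemma pw_const_norm_le_SUP:
  assumes "triangulation T E" "pw_const T E \<Psi>" "x \<in> E"
  shows "norm (\<Psi> x) \<le> (SUP x\<in>E. norm (\<Psi> x))"
proof (rule cSUP_upper[OF assms(3)])
  have "finite T"
    using assms(1) unfolding triangulation_def by blast
  then have "finite ((\<lambda>x. norm (\<Psi> x)) ` E)"
    using finite_imageI[OF pw_const_finite_image[OF _ assms(2)], of norm] by (simp add: image_image)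
  then show "bdd_above ((\<lambda>x. norm (\<Psi> x)) ` E)"
    by (rule bdd_above_finite)
qed

theorem lemma4p10:
  fixes p :: real and W :: "real^3^3 \<Rightarrow> ennreal"
  assumes "1 < p" and "hyps_W p W"
  shows "\<exists>\<beta> :: real \<Rightarrow> real \<Rightarrow> real \<Rightarrow> real. (\<forall>\<eta> a b. \<beta> \<eta> a b > 0) \<and>
    (\<forall>(E :: (real^2) set) (\<eta>::real) (G :: real^2 \<Rightarrow> real^2^3) (\<epsilon>::real) T (\<Psi> :: real^2 \<Rightarrow> real^2^2).
       open E \<and> bounded E \<and> \<eta> > 0 \<and> continuous_on (closure E) G \<and>
       (\<forall>x\<in>closure E. norm (cross3 (column 1 (G x)) (column 2 (G x))) \<ge> \<eta>) \<and>
       0 < \<epsilon> \<and> \<epsilon> < 1/2 \<and> triangulation T E \<and> pw_const T E \<Psi> \<and>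
       (\<forall>x\<in>E. \<bar>det (\<Psi> x) - 1\<bar> \<le> \<epsilon>)
     \<longrightarrow> (let \<beta>0 = \<beta> \<eta> (SUP x\<in>E. norm (G x)) (SUP x\<in>E. norm (\<Psi> x)) in
          \<exists>\<phi> :: real^2 \<Rightarrow> real^3. C_inf \<phi> \<and>
            (\<forall>x\<in>E. norm (\<phi> x) \<le> \<beta>0) \<and>
            (\<forall>x\<in>E. det (augm (G x ** \<Psi> x) (\<phi> x)) \<ge> 1 / \<beta>0) \<and>
            (\<integral>\<^sup>+ x\<in>E. W (augm (G x ** \<Psi> x) (\<phi> x)) \<partial>lebesgue)
              \<le> (\<integral>\<^sup>+ x\<in>E. W0 W (G x ** \<Psi> x) \<partial>lebesgue) + ennreal \<epsilon>))"
proof -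
  interpret stored_energy p W
    using assms by unfold_locales
  define \<beta> where "\<beta> \<eta> a b = (SOME \<beta>. 0 < \<beta> \<and> (0 < \<eta> \<longrightarrow> recovery_bound W \<eta> a b \<beta>))" for \<eta> a b
  have \<beta>: "0 < \<beta> \<eta> a b \<and> (0 < \<eta> \<longrightarrow> recovery_bound W \<eta> a b (\<beta> \<eta> a b))" for \<eta> a b
    unfolding \<beta>_def by (rule someI_ex) (metis recovery_bound_exists zero_less_one)
  have sup_bounds: "(\<forall>x\<in>E. norm (G x) \<le> (SUP x\<in>E. norm (G x))) \<and> (\<forall>x\<in>E. norm (\<Psi> x) \<le> (SUP x\<in>E. norm (\<Psi> x)))"
    if "bounded E" "continuous_on (closure E) G" "triangulation T E" "pw_const T E \<Psi>"
    for E and G :: "real^2 \<Rightarrow> real^2^3" and T and \<Psi> :: "real^2 \<Rightarrow> real^2^2"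
    using norm_le_SUP_if_continuous_on_closure[OF that(1,2)] pw_const_norm_le_SUP[OF that(3,4)] by blast
  show ?thesis
    unfolding Let_def
    by (intro exI[of _ \<beta>] conjI allI impI, use \<beta> in blast)
      (use \<beta> sup_bounds in \<open>auto simp: recovery_bound_def\<close>)
qed

end
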